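(* Let $T$ be an $n$-universal tree. Then for every binary rooted tree $T'$ with $n$ leaves and no degree-1 nodes, there is an injective map $f$ from the nodes of $T'$ to the nodes of $T$ with the following two properties: - $f(\mathsf{NCA}(u,v))=\mathsf{NCA}(f(u),f(v))$ for all $u,v$; - the depth of $f(v)$ in $T$ has the same parity as the depth of $v$ in $T'$, for every node $v$. That is, $T$ is a parity-preserving minor-universal tree for this class.
   Context: Trees are rooted; depth is the distance from the root (the root has depth 0); degree is the number of children; binary means every node has at most two children. $\mathsf{NCA}$ denotes the nearest common ancestor. Cutting: select nodes $a,b$ with $a$ a child of $b$, and remove the entire subtree rooted at $a$ together with the edge between $a$ and $b$. Contraction: select an internal node $b$ with parent $a$ and exactly one child $c$, and remove $b$. If $c$ is internal, the children of $c$ are made children of $a$ and $c$ is removed. If $c$ is a leaf, it becomes a child of $a$. $T$ implements $T'$ if $T'$ can be obtained (up to isomorphism) from $T$ by a sequence of cuttings and contractions. $T$ is $n$-universal if it implements every rooted tree with at most $n$ leaves and no degree-1 nodes. *)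

theory Defs
  imports Main
begin

text \<open>Finite rooted trees as rose trees; the order of children is irrelevant
  (trees are compared up to isomorphism). Nodes are addressed by paths from the root
  (lists of child indices); the root is the empty path.\<close>

datatype tree = Node "tree list"

fun children :: "tree \<Rightarrow> tree list" where
  "children (Node ts) = ts"

fun subtree_at :: "tree \<Rightarrow> nat list \<Rightarrow> tree option" where
  "subtree_at t [] = Some t"
| "subtree_at (Node ts) (i # p) = (if i < length ts then subtree_at (ts ! i) p else None)"

definition nodes :: "tree \<Rightarrow> nat list set" where
  "nodes t = {p. subtree_at t p \<noteq> None}"

definition degree :: "tree \<Rightarrow> nat list \<Rightarrow> nat" where
  "degree t p = (case subtree_at t p of None \<Rightarrow> 0 | Some s \<Rightarrow> length (children s))"

definition leaves :: "tree \<Rightarrow> nat list set" where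
  "leaves t = {p \<in> nodes t. degree t p = 0}"

definition num_leaves :: "tree \<Rightarrow> nat" where
  "num_leaves t = card (leaves t)"

definition no_deg1 :: "tree \<Rightarrow> bool" where
  "no_deg1 t \<longleftrightarrow> (\<forall>p \<in> nodes t. degree t p \<noteq> 1)"

definition binary :: "tree \<Rightarrow> bool" where
  "binary t \<longleftrightarrow> (\<forall>p \<in> nodes t. degree t p \<le> 2)"

fun nca :: "nat list \<Rightarrow> nat list \<Rightarrow> nat list" where
  "nca (x # xs) (y # ys) = (if x = y then x # nca xs ys else [])"
| "nca _ _ = []"

definition depth :: "nat list \<Rightarrow> nat" where
  "depth p = length p"

inductive iso :: "tree \<Rightarrow> tree \<Rightarrow> bool" where
  "length ts = length us \<Longrightarrow> bij_betw \<sigma> {..<length ts} {..<length us} \<Longrightarrow>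
   (\<forall>i<length ts. iso (ts ! i) (us ! \<sigma> i)) \<Longrightarrow> iso (Node ts) (Node us)"

inductive cut_step :: "tree \<Rightarrow> tree \<Rightarrow> bool" where
  cut_here: "i < length ts \<Longrightarrow> cut_step (Node ts) (Node (take i ts @ drop (Suc i) ts))"
| cut_deeper: "i < length ts \<Longrightarrow> cut_step (ts ! i) t' \<Longrightarrow> cut_step (Node ts) (Node (ts[i := t']))"

inductive contract_step :: "tree \<Rightarrow> tree \<Rightarrow> bool" where
  contr_leaf: "i < length ts \<Longrightarrow> ts ! i = Node [Node []] \<Longrightarrow>
     contract_step (Node ts) (Node (ts[i := Node []]))"
| contr_internal: "i < length ts \<Longrightarrow> ts ! i = Node [Node cs] \<Longrightarrow> cs \<noteq> [] \<Longrightarrow>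
     contract_step (Node ts) (Node (take i ts @ drop (Suc i) ts @ cs))"
| contr_deeper: "i < length ts \<Longrightarrow> contract_step (ts ! i) t' \<Longrightarrow>
     contract_step (Node ts) (Node (ts[i := t']))"

definition implements :: "tree \<Rightarrow> tree \<Rightarrow> bool" where
  "implements T T' \<longleftrightarrow>
     (\<exists>S. (\<lambda>x y. cut_step x y \<or> contract_step x y)\<^sup>*\<^sup>* T S \<and> iso S T')"

definition universal :: "nat \<Rightarrow> tree \<Rightarrow> bool" where
  "universal n T \<longleftrightarrow>
     (\<forall>T'. num_leaves T' \<le> n \<longrightarrow> no_deg1 T' \<longrightarrow> implements T T')"

end

theory Submission
  imports Defs "HOL-Library.Sublist"
begin

text \<open>If \<open>T\<close> implements \<open>T'\<close>, there is a map \<open>g\<close> from the nodes of \<open>T'\<close> to those of \<open>T\<close>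
  that preserves and reflects ancestry and preserves the parity of the depths of nearest common
  ancestors. Such maps compose, and one exists for a single cutting (the remaining children keep
  their places), for an isomorphism, and for a single contraction: a contracted leaf is sent to the
  removed node above it, and the children of a contracted internal node move up two levels.
  The map \<open>g\<close> need not preserve nearest common ancestors, but when \<open>T'\<close> is binary the images
  of the two children of an internal node \<open>v\<close> are incomparable, and sending \<open>v\<close> to the nearest
  common ancestor of these images gives a strictly monotone, hence injective, map that preserves
  nearest common ancestors and whose depths have the parity of \<open>nca (v @ [0]) (v @ [1]) = v\<close>.\<close>

lemma nca_eq_longest_common_prefix: "nca = longest_common_prefix"
proof (intro ext)
  show "nca x y = longest_common_prefix x y" for x y
    by (induction x y rule: nca.induct) auto
qed

lemma prefix_nca_iff: "prefix z (nca x y) \<longleftrightarrow> prefix z x \<and> prefix z y"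
  using longest_common_prefix_prefix1 longest_common_prefix_prefix2
    longest_common_prefix_max_prefix prefix_order.trans
  unfolding nca_eq_longest_common_prefix by metis

lemma nca_prefix1: "prefix (nca x y) x"
  and nca_prefix2: "prefix (nca x y) y"
  using prefix_nca_iff by blast+

lemma nca_commute: "nca x y = nca y x"
  by (induction x y rule: nca.induct) auto

lemma nca_eq_left_if_prefix: "prefix x y \<Longrightarrow> nca x y = x"
  by (meson nca_prefix1 prefix_nca_iff prefix_order.antisym prefix_order.refl)

lemma nca_self [simp]: "nca x x = x"
  by (simp add: nca_eq_left_if_prefix)

lemma nca_append: "nca (p @ x) (p @ y) = p @ nca x y"
  by (induction p) auto

lemma nca_parallel_extend:
  "a \<parallel> b \<Longrightarrow> prefix a a' \<Longrightarrow> prefix b b' \<Longrightarrow> nca a' b' = nca a b"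
proof -
  assume "a \<parallel> b" and "prefix a a'" and "prefix b b'"
  then obtain as c cs d ds where "c \<noteq> d" "a = as @ c # cs" "b = as @ d # ds"
    using parallel_decomp by blast
  moreover from this obtain cs' ds' where "a' = as @ c # cs'" "b' = as @ d # ds'"
    using \<open>prefix a a'\<close> \<open>prefix b b'\<close> by (auto simp: prefix_def)
  ultimately show ?thesis by (simp add: nca_append)
qed

lemma strict_prefix_nca_if_parallel: "x \<parallel> y \<Longrightarrow> strict_prefix (nca x y) x"
  unfolding strict_prefix_def using nca_prefix1 nca_prefix2 parallelD1 by metis

lemma parallel_nca_children:
  assumes "u \<parallel> v"
  obtains c d where "c \<noteq> d" "prefix (nca u v @ [c]) u" "prefix (nca u v @ [d]) v"
proof -
  obtain as c cs d ds where "c \<noteq> d" "u = as @ c # cs" "v = as @ d # ds"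
    using parallel_decomp[OF assms] by blast
  then show thesis by (intro that[of c d]) (simp_all add: nca_append)
qed

lemma subtree_at_append:
  "subtree_at t (p @ q) = (case subtree_at t p of None \<Rightarrow> None | Some s \<Rightarrow> subtree_at s q)"
  by (induction t p rule: subtree_at.induct) auto

lemma nodes_prefix_closed: "q \<in> nodes t \<Longrightarrow> prefix p q \<Longrightarrow> p \<in> nodes t"
  unfolding nodes_def by (auto simp: prefix_def subtree_at_append split: option.splits)

lemma Nil_in_nodes [simp]: "[] \<in> nodes t"
  by (simp add: nodes_def)

lemma Cons_in_nodes_Node [simp]:
  "j # q \<in> nodes (Node us) \<longleftrightarrow> j < length us \<and> q \<in> nodes (us ! j)"
  by (simp add: nodes_def)

lemma snoc_in_nodes_iff: "v \<in> nodes t \<Longrightarrow> v @ [c] \<in> nodes t \<longleftrightarrow> c < degree t v"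
proof -
  assume "v \<in> nodes t"
  then obtain s where "subtree_at t v = Some s" by (auto simp: nodes_def)
  moreover obtain ts where "s = Node ts" by (cases s)
  ultimately show ?thesis by (auto simp: nodes_def degree_def subtree_at_append)
qed

locale parity_embedding =
  fixes A B :: tree and g :: "nat list \<Rightarrow> nat list"
  assumes maps_nodes: "v \<in> nodes B \<Longrightarrow> g v \<in> nodes A"
    and prefix_iff: "u \<in> nodes B \<Longrightarrow> v \<in> nodes B \<Longrightarrow> prefix (g u) (g v) \<longleftrightarrow> prefix u v"
    and nca_depth_parity: "u \<in> nodes B \<Longrightarrow> v \<in> nodes B \<Longrightarrow>
      even (length (nca (g u) (g v))) \<longleftrightarrow> even (length (nca u v))"

definition parity_embeds :: "tree \<Rightarrow> tree \<Rightarrow> bool" where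
  "parity_embeds A B \<longleftrightarrow> (\<exists>g. parity_embedding A B g)"

lemma parity_embedding_id: "parity_embedding A A id"
  by unfold_locales auto

lemma parity_embedding_comp:
  "parity_embedding A B g \<Longrightarrow> parity_embedding B C h \<Longrightarrow> parity_embedding A C (g \<circ> h)"
  unfolding parity_embedding_def by auto

lemma parity_embeds_refl: "parity_embeds A A"
  unfolding parity_embeds_def using parity_embedding_id by blast

lemma parity_embeds_trans: "parity_embeds A B \<Longrightarrow> parity_embeds B C \<Longrightarrow> parity_embeds A C"
  unfolding parity_embeds_def using parity_embedding_comp by blast

lemma parity_embeds_Node:
  assumes sub: "\<And>j. j < length us \<Longrightarrow> subtree_at (Node ts) (P j) = Some (S j)"
    and emb: "\<And>j. j < length us \<Longrightarrow> parity_embeds (S j) (us ! j)"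
    and odd: "\<And>j. j < length us \<Longrightarrow> odd (length (P j))"
    and par: "\<And>j k. j < length us \<Longrightarrow> k < length us \<Longrightarrow> j \<noteq> k \<Longrightarrow> P j \<parallel> P k"
    and nca_even: "\<And>j k. j < length us \<Longrightarrow> k < length us \<Longrightarrow> j \<noteq> k \<Longrightarrow>
      even (length (nca (P j) (P k)))"
  shows "parity_embeds (Node ts) (Node us)"
proof -
  obtain h where h: "\<And>j. j < length us \<Longrightarrow> parity_embedding (S j) (us ! j) (h j)"
    using emb unfolding parity_embeds_def by metis
  define g where "g p = (case p of [] \<Rightarrow> [] | j # q \<Rightarrow> P j @ h j q)" for p
  have g_Nil [simp]: "g [] = []" and g_Cons [simp]: "g (j # q) = P j @ h j q" for j q
    by (simp_all add: g_def)
  have P_ne: "P j \<noteq> []" if "j < length us" for j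
    using odd[OF that] by auto
  have same: "prefix (g (j # q)) (g (j # r)) \<longleftrightarrow> prefix q r"
    "even (length (nca (g (j # q)) (g (j # r)))) \<longleftrightarrow> even (length (nca (j # q) (j # r)))"
    if "j < length us" "q \<in> nodes (us ! j)" "r \<in> nodes (us ! j)" for j q r
  proof -
    have "prefix (h j q) (h j r) \<longleftrightarrow> prefix q r"
      "even (length (nca (h j q) (h j r))) \<longleftrightarrow> even (length (nca q r))"
      using parity_embedding.prefix_iff[OF h] parity_embedding.nca_depth_parity[OF h] that
      by blast+
    with odd[OF that(1)] show "prefix (g (j # q)) (g (j # r)) \<longleftrightarrow> prefix q r"
      "even (length (nca (g (j # q)) (g (j # r)))) \<longleftrightarrow> even (length (nca (j # q) (j # r)))"
      by (simp_all add: nca_append)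
  qed
  have diff: "\<not> prefix (g (j # q)) (g (k # r))"
    "even (length (nca (g (j # q)) (g (k # r))))"
    if "j < length us" "k < length us" "j \<noteq> k" for j k q r
  proof -
    have "P j @ h j q \<parallel> P k @ h k r"
      using par[OF that] by (rule parallel_append)
    then show "\<not> prefix (g (j # q)) (g (k # r))" by (simp add: parallelD1)
    have "nca (g (j # q)) (g (k # r)) = nca (P j) (P k)"
      using par[OF that] by (rule nca_parallel_extend) simp_all
    then show "even (length (nca (g (j # q)) (g (k # r))))"
      using nca_even[OF that] by simp
  qed
  have "parity_embedding (Node ts) (Node us) g"
  proof
    fix v assume "v \<in> nodes (Node us)"
    then show "g v \<in> nodes (Node ts)"
    proof (cases v)
      case (Cons j q)
      with \<open>v \<in> nodes (Node us)\<close> have "j < length us" "h j q \<in> nodes (S j)"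
        using parity_embedding.maps_nodes[OF h] by auto
      then show ?thesis
        using sub Cons by (auto simp: nodes_def subtree_at_append)
    qed simp
  next
    fix u v assume "u \<in> nodes (Node us)" "v \<in> nodes (Node us)"
    then consider "u = []"
      | j q where "u = j # q" "v = []" "j < length us"
      | j q r where "u = j # q" "v = j # r" "j < length us" "q \<in> nodes (us ! j)" "r \<in> nodes (us ! j)"
      | j q k r where "u = j # q" "v = k # r" "j < length us" "k < length us" "j \<noteq> k"
      by (cases u; cases v) auto
    note pair_cases = this
    show "prefix (g u) (g v) \<longleftrightarrow> prefix u v"
      by (cases rule: pair_cases) (use same diff P_ne in auto)
    show "even (length (nca (g u) (g v))) \<longleftrightarrow> even (length (nca u v))"
      by (cases rule: pair_cases) (use same diff in auto)
  qed
  then show ?thesis unfolding parity_embeds_def by blast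
qed

lemma parity_embeds_Node_children:
  assumes "\<And>j. j < length us \<Longrightarrow> s j < length ts \<and> parity_embeds (ts ! s j) (us ! j)"
    and "inj_on s {..<length us}"
  shows "parity_embeds (Node ts) (Node us)"
proof (rule parity_embeds_Node[where P = "\<lambda>j. [s j]" and S = "\<lambda>j. ts ! s j"])
  fix j k assume "j < length us" "k < length us" "j \<noteq> k"
  then have "s j \<noteq> s k" using inj_onD[OF assms(2)] by blast
  then show "[s j] \<parallel> [s k]" "even (length (nca [s j] [s k]))"
    by (auto simp: parallel_def)
qed (use assms(1) in auto)

lemma parity_embeds_cut_step: "cut_step A B \<Longrightarrow> parity_embeds A B"
proof (induction rule: cut_step.induct)
  case (cut_here i ts)
  let ?s = "\<lambda>j. if j < i then j else Suc j"
  show ?case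
    using cut_here
    by (intro parity_embeds_Node_children[where s = ?s])
      (auto simp: nth_append min_def parity_embeds_refl inj_on_def)
next
  case (cut_deeper i ts t')
  then show ?case
    by (intro parity_embeds_Node_children[where s = id]) (auto simp: parity_embeds_refl nth_list_update)
qed

lemma parity_embeds_leaf: "parity_embeds (Node [Node []]) (Node [])"
  unfolding parity_embeds_def parity_embedding_def
  by (rule exI[of _ id]) (auto simp: nodes_def elim: subtree_at.elims)

lemma parity_embeds_contract_step: "contract_step A B \<Longrightarrow> parity_embeds A B"
proof (induction rule: contract_step.induct)
  case (contr_leaf i ts)
  then show ?case
    by (intro parity_embeds_Node_children[where s = id])
      (auto simp: parity_embeds_refl nth_list_update parity_embeds_leaf)
next
  case (contr_internal i ts cs)
  let ?us = "take i ts @ drop (Suc i) ts @ cs"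
  let ?m = "length ts - 1"
  define P where "P j = (if j < ?m then [if j < i then j else Suc j] else [i, 0, j - ?m])" for j
  define S where "S j = (if j < ?m then ts ! (if j < i then j else Suc j) else cs ! (j - ?m))" for j
  have "length ?us = ?m + length cs"
    using contr_internal by auto
  show ?case
  proof (rule parity_embeds_Node[where P = P and S = S])
    fix j assume "j < length ?us"
    with \<open>length ?us = ?m + length cs\<close> contr_internal
    have "?us ! j = S j" "subtree_at (Node ts) (P j) = Some (S j)"
      by (auto simp: S_def P_def nth_append min_def)
    then show "subtree_at (Node ts) (P j) = Some (S j)" "parity_embeds (S j) (?us ! j)"
      by (simp_all add: parity_embeds_refl)
    show "odd (length (P j))"
      by (simp add: P_def)
  next
    fix j k :: nat assume "j \<noteq> k"
    then show "P j \<parallel> P k" "even (length (nca (P j) (P k)))"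
      by (auto simp: P_def parallel_def)
  qed
next
  case (contr_deeper i ts t')
  then show ?case
    by (intro parity_embeds_Node_children[where s = id]) (auto simp: parity_embeds_refl nth_list_update)
qed

lemma parity_embeds_iso: "iso A B \<Longrightarrow> parity_embeds A B"
proof (induction rule: iso.induct)
  case (1 ts us \<sigma>)
  let ?s = "the_inv_into {..<length ts} \<sigma>"
  have bij: "bij_betw ?s {..<length us} {..<length ts}"
    using 1 by (simp add: bij_betw_the_inv_into)
  show ?case
  proof (rule parity_embeds_Node_children[where s = ?s])
    fix j assume "j < length us"
    then have "?s j < length ts" "\<sigma> (?s j) = j"
      using bij_betw_apply[OF bij] f_the_inv_into_f_bij_betw[OF 1(2)] by auto
    with 1(3) show "?s j < length ts \<and> parity_embeds (ts ! ?s j) (us ! j)"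
      by metis
  qed (use bij in \<open>rule bij_betw_imp_inj_on\<close>)
qed

lemma parity_embeds_if_implements: "implements T T' \<Longrightarrow> parity_embeds T T'"
proof -
  assume "implements T T'"
  then obtain S where steps: "(\<lambda>x y. cut_step x y \<or> contract_step x y)\<^sup>*\<^sup>* T S" and "iso S T'"
    unfolding implements_def by blast
  from steps have "parity_embeds T S"
    by (induction rule: rtranclp_induct)
      (auto intro: parity_embeds_refl parity_embeds_trans parity_embeds_cut_step
        parity_embeds_contract_step)
  with \<open>iso S T'\<close> show ?thesis
    using parity_embeds_iso parity_embeds_trans by blast
qed

locale binary_parity_embedding = parity_embedding +
  assumes binary: "binary B" and no_deg1: "no_deg1 B"
begin

lemma child_in_nodes_iff:
  assumes "v \<in> nodes B" and "degree B v \<noteq> 0"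
  shows "v @ [c] \<in> nodes B \<longleftrightarrow> c < 2"
proof -
  have "degree B v = 2"
    using assms binary no_deg1 unfolding binary_def no_deg1_def by fastforce
  then show ?thesis using snoc_in_nodes_iff[OF assms(1)] by simp
qed

lemma child_in_nodesD:
  assumes "v @ [c] \<in> nodes B"
  shows "v \<in> nodes B" and "degree B v \<noteq> 0" and "c < 2"
proof -
  show v: "v \<in> nodes B"
    using assms by (rule nodes_prefix_closed) simp
  show "degree B v \<noteq> 0"
    using assms snoc_in_nodes_iff[OF v] by simp
  then show "c < 2"
    using assms child_in_nodes_iff[OF v] by simp
qed

lemma child_images_parallel:
  assumes "v \<in> nodes B" and "degree B v \<noteq> 0" and "c < 2" and "d < 2" and "c \<noteq> d"
  shows "g (v @ [c]) \<parallel> g (v @ [d])"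
  using assms prefix_iff child_in_nodes_iff by (auto simp: parallel_def)

definition branch_point :: "nat list \<Rightarrow> nat list" where
  "branch_point v = (if degree B v = 0 then g v else nca (g (v @ [0])) (g (v @ [1])))"

lemma prefix_branch_point: "v \<in> nodes B \<Longrightarrow> prefix (g v) (branch_point v)"
  using prefix_iff child_in_nodes_iff by (auto simp: branch_point_def prefix_nca_iff)

lemma branch_point_eq_nca_children:
  assumes "degree B v \<noteq> 0" and "c < 2" "d < 2" "c \<noteq> d"
  shows "branch_point v = nca (g (v @ [c])) (g (v @ [d]))"
proof -
  from assms(2-4) have "c = 0 \<and> d = 1 \<or> c = 1 \<and> d = 0" by linarith
  with assms(1) show ?thesis by (auto simp: branch_point_def nca_commute)
qed

lemma branch_point_strict_prefix_child:
  assumes "v \<in> nodes B" and "degree B v \<noteq> 0" and "c < 2"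
  shows "strict_prefix (branch_point v) (g (v @ [c]))"
proof -
  have "1 - c < 2" "c \<noteq> 1 - c" using assms(3) by arith+
  with assms show ?thesis
    using branch_point_eq_nca_children child_images_parallel strict_prefix_nca_if_parallel
    by metis
qed

lemma branch_point_strict_mono:
  assumes "x \<in> nodes B" and "strict_prefix v x"
  shows "strict_prefix (branch_point v) (branch_point x)"
proof -
  obtain c cs where "x = v @ c # cs"
    using assms(2) by (rule strict_prefixE')
  then have "prefix (v @ [c]) x" by simp
  then have "v @ [c] \<in> nodes B" "prefix (g (v @ [c])) (g x)"
    using assms(1) nodes_prefix_closed prefix_iff by blast+
  with child_in_nodesD have "strict_prefix (branch_point v) (g (v @ [c]))"
    by (blast intro: branch_point_strict_prefix_child)
  with \<open>prefix (g (v @ [c])) (g x)\<close> prefix_branch_point[OF assms(1)] show ?thesis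
    by (meson prefix_order.order_trans prefix_order.less_le_trans)
qed

lemma nca_branch_point_below_children:
  assumes "x \<in> nodes B" "y \<in> nodes B" and "prefix (v @ [c]) x" "prefix (v @ [d]) y" and "c \<noteq> d"
  shows "nca (branch_point x) (branch_point y) = branch_point v"
proof -
  have "v @ [c] \<in> nodes B" "v @ [d] \<in> nodes B"
    using assms nodes_prefix_closed by blast+
  then have v: "v \<in> nodes B" "degree B v \<noteq> 0" and "c < 2" "d < 2"
    using child_in_nodesD by blast+
  have "prefix (g (v @ [c])) (branch_point x)" "prefix (g (v @ [d])) (branch_point y)"
    using assms \<open>v @ [c] \<in> nodes B\<close> \<open>v @ [d] \<in> nodes B\<close>
      prefix_iff prefix_branch_point prefix_order.order_trans by blast+
  with v \<open>c < 2\<close> \<open>d < 2\<close> assms(5)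
  have "nca (branch_point x) (branch_point y) = nca (g (v @ [c])) (g (v @ [d]))"
    by (intro nca_parallel_extend child_images_parallel)
  also have "\<dots> = branch_point v"
    using v \<open>c < 2\<close> \<open>d < 2\<close> assms(5) by (simp add: branch_point_eq_nca_children)
  finally show ?thesis .
qed

lemma branch_point_nca:
  assumes "u \<in> nodes B" and "v \<in> nodes B"
  shows "branch_point (nca u v) = nca (branch_point u) (branch_point v)"
proof (cases u v rule: prefix_cases)
  case 1
  then have "prefix (branch_point u) (branch_point v)"
    using branch_point_strict_mono[OF assms(2)] by (cases "u = v") (auto simp: strict_prefix_def)
  with 1 show ?thesis by (simp add: nca_eq_left_if_prefix)
next
  case 2
  then have "prefix (branch_point v) (branch_point u)"
    using branch_point_strict_mono[OF assms(1)] by (simp add: strict_prefix_def)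
  moreover have "prefix v u"
    using 2 by (simp add: strict_prefix_def)
  ultimately show ?thesis
    by (metis nca_commute nca_eq_left_if_prefix)
next
  case 3
  then obtain c d where "c \<noteq> d" "prefix (nca u v @ [c]) u" "prefix (nca u v @ [d]) v"
    by (rule parallel_nca_children)
  with assms show ?thesis
    by (simp add: nca_branch_point_below_children)
qed

lemma inj_on_branch_point: "inj_on branch_point (nodes B)"
proof (rule inj_onI, rule ccontr)
  fix u v assume u: "u \<in> nodes B" and v: "v \<in> nodes B"
    and eq: "branch_point u = branch_point v" and "u \<noteq> v"
  then have "strict_prefix (nca u v) u \<or> strict_prefix (nca u v) v"
    using nca_prefix1 nca_prefix2 by (metis strict_prefix_def)
  then have "strict_prefix (branch_point (nca u v)) (branch_point u)"
    using branch_point_strict_mono u v eq by metis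
  moreover have "branch_point (nca u v) = branch_point u"
    using branch_point_nca[OF u v] eq by simp
  ultimately show False by simp
qed

lemma branch_point_in_nodes:
  assumes "v \<in> nodes B"
  shows "branch_point v \<in> nodes A"
proof (cases "degree B v = 0")
  case False
  then have "g (v @ [0]) \<in> nodes A"
    using assms child_in_nodes_iff maps_nodes by simp
  with False show ?thesis
    using nodes_prefix_closed nca_prefix1 by (simp add: branch_point_def)
qed (simp add: branch_point_def assms maps_nodes)

lemma even_depth_branch_point:
  assumes "v \<in> nodes B"
  shows "even (depth (branch_point v)) \<longleftrightarrow> even (depth v)"
proof (cases "degree B v = 0")
  case True
  then show ?thesis
    using nca_depth_parity[OF assms assms] by (simp add: branch_point_def depth_def)
next
  case False
  have "nca (v @ [0]) (v @ [1]) = v"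
    using nca_append[of v "[0]" "[1]"] by simp
  with False show ?thesis
    using nca_depth_parity child_in_nodes_iff[OF assms False]
    by (simp add: branch_point_def depth_def)
qed

end

theorem lemma14:
  fixes T :: tree and n :: nat
  assumes "universal n T"
  shows "\<forall>T'. binary T' \<longrightarrow> num_leaves T' = n \<longrightarrow> no_deg1 T' \<longrightarrow>
    (\<exists>f. inj_on f (nodes T') \<and> f ` nodes T' \<subseteq> nodes T
       \<and> (\<forall>u \<in> nodes T'. \<forall>v \<in> nodes T'. f (nca u v) = nca (f u) (f v))
       \<and> (\<forall>v \<in> nodes T'. even (depth (f v)) = even (depth v)))"
proof (intro allI impI)
  fix T' assume "binary T'" and "num_leaves T' = n" and "no_deg1 T'"
  with assms have "implements T T'"
    unfolding universal_def by simp
  then obtain g where "parity_embedding T T' g"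
    using parity_embeds_if_implements parity_embeds_def by blast
  with \<open>binary T'\<close> \<open>no_deg1 T'\<close> interpret binary_parity_embedding T T' g
    by (simp add: binary_parity_embedding_axioms_def binary_parity_embedding_def)
  show "\<exists>f. inj_on f (nodes T') \<and> f ` nodes T' \<subseteq> nodes T
       \<and> (\<forall>u \<in> nodes T'. \<forall>v \<in> nodes T'. f (nca u v) = nca (f u) (f v))
       \<and> (\<forall>v \<in> nodes T'. even (depth (f v)) = even (depth v))"
    using inj_on_branch_point branch_point_in_nodes branch_point_nca even_depth_branch_point
    by blast
qed

end
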